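(* Consider the problem $\min\{F(x,z): x\in\operatorname{conv}(X),\ z\in Z\}$ where $F:\mathbb{R}^n\times\mathbb{R}^q\to\mathbb{R}$ is convex and continuously differentiable, $X\subset\mathbb{R}^n$ is nonempty and compact (so $\operatorname{conv}(X)$ is convex and compact), $Z\subseteq\mathbb{R}^q$ is nonempty, closed and convex, and for each $x\in\operatorname{conv}(X)$ the map $z\mapsto F(x,z)$ is inf-compact on $Z$. Fix an integer $t_{\max}\ge1$. Let $x^0\in\operatorname{conv}(X)$, $z^0\in\arg\min_{z\in Z}F(x^0,z)$, and $D^0\subseteq\operatorname{conv}(X)$ be a nonempty closed convex set. For $k=0,1,2,\dots$ perform one SDM-GS iteration: set $(\tilde x,\tilde z)=(x^k,z^k)$; for $t=1,\dots,t_{\max}$ let $\tilde x\in\arg\min\{F(x,\tilde z): x\in D^k\}$ and then $\tilde z\in\arg\min\{F(\tilde x,z): z\in Z\}$; set $(x^{k+1},z^{k+1})=(\tilde x,\tilde z)$; choose $\hat x^{k+1}\in\arg\min\{\nabla_x F(x^{k+1},z^{k+1})(x-x^{k+1}): x\in X\}$; and let $D^{k+1}$ be any closed convex set with $\{x^{k+1}+\alpha(\hat x^{k+1}-x^{k+1}):\alpha\in[0,1]\}\subseteq D^{k+1}\subseteq\operatorname{conv}(X)$. Then the sequence $\{(x^k,z^k)\}$ has limit points, and every limit point $(\bar x,\bar z)$ is an optimal solution of $\min\{F(x,z): x\in\operatorname{conv}(X),\ z\in Z\}$.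
   Context: A function $z\mapsto g(z)$ is inf-compact on $Z$ if for every $\ell\in\mathbb{R}$ the set $\{z\in Z: g(z)\le\ell\}$ is compact. $\nabla_x F(x,z)$ denotes the partial gradient with respect to $x$, viewed as a row vector. *)

theory Defs
  imports "HOL-Analysis.Analysis"
begin

definition argmin_set :: "('a \<Rightarrow> real) \<Rightarrow> 'a set \<Rightarrow> 'a set" where
  "argmin_set f S = {x \<in> S. \<forall>y \<in> S. f x \<le> f y}"

definition inf_compact_on :: "('b::topological_space \<Rightarrow> real) \<Rightarrow> 'b set \<Rightarrow> bool" where
  "inf_compact_on g Z \<longleftrightarrow> (\<forall>l::real. compact {z \<in> Z. g z \<le> l})"

end

theory Submission
  imports Defs
begin

text \<open>
  From \<open>k = 1\<close> on, \<open>x\<^sup>k\<close> lies in \<open>D\<^sup>k\<close> (the endpoint \<open>\<alpha> = 0\<close> of the segment), and the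
  Gauss-Seidel sweep of iteration \<open>k\<close> ends at a value no larger than \<open>F(u, z\<^sup>k)\<close> for every
  \<open>u \<in> D\<^sup>k\<close>; so the values \<open>F(x\<^sup>k, z\<^sup>k)\<close> decrease. Convexity spreads the inf-compactness of the
  single slice \<open>F(x\<^sup>1, -)\<close> to a bound on the \<open>z\<close>-part of the whole sublevel set over
  \<open>conv X\<close>, so the iterates have limit points. At a limit point \<open>(x\<^sup>*, z\<^sup>*)\<close>, \<open>z\<^sup>*\<close> minimises
  \<open>F(x\<^sup>*, -)\<close>. Along a further subsequence the directions \<open>xhat\<^sup>k\<close> converge to some
  \<open>x' \<in> X\<close>, and the same descent inequality applied to the segments from \<open>x\<^sup>k\<close> towards
  \<open>xhat\<^sup>k\<close> shows that \<open>F(-, z\<^sup>*)\<close> does not decrease from \<open>x\<^sup>*\<close> towards \<open>x'\<close>. Hence the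
  \<open>x\<close>-derivative at \<open>(x\<^sup>*, z\<^sup>*)\<close> is nonnegative in direction \<open>x' - x\<^sup>*\<close>, and by the minimality
  of \<open>xhat\<^sup>k\<close> for the linearisation in every direction \<open>u - x\<^sup>*\<close>, \<open>u \<in> conv X\<close>; convexity
  turns these first-order conditions into optimality over \<open>conv X \<times> Z\<close>.
\<close>

lemma has_derivative_directional_quotient:
  assumes "(g has_derivative g') (at p)"
  shows "((\<lambda>t. (g (p + t *\<^sub>R v) - g p) / t) \<longlongrightarrow> g' v) (at_right (0::real))"
proof -
  have "linear g'" using assms has_derivative_linear by blast
  have "((\<lambda>t. p + t *\<^sub>R v) has_derivative (\<lambda>t. t *\<^sub>R v)) (at 0)"
    by (auto intro!: derivative_eq_intros)
  from has_derivative_compose[OF this, of g g'] assms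
  have "((\<lambda>t. g (p + t *\<^sub>R v)) has_derivative (\<lambda>t. g' (t *\<^sub>R v))) (at 0)" by simp
  then have "((\<lambda>t. g (p + t *\<^sub>R v)) has_derivative (\<lambda>t. g' v * t)) (at 0)"
    using linear_scale[OF \<open>linear g'\<close>] by (simp add: mult.commute)
  then have "((\<lambda>t. g (p + t *\<^sub>R v)) has_field_derivative g' v) (at 0)"
    by (simp add: has_field_derivative_def)
  then have "((\<lambda>t. g (p + t *\<^sub>R v)) has_field_derivative g' v) (at 0 within {0<..})"
    by (rule has_field_derivative_at_within)
  then show ?thesis by (simp add: has_field_derivative_iff)
qed

lemma convex_on_has_derivative_above_tangent:
  fixes g :: "'a::real_normed_vector \<Rightarrow> real"
  assumes "convex_on UNIV g" and "(g has_derivative g') (at p)"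
  shows "g p + g' (q - p) \<le> g q"
proof -
  have "g' (q - p) \<le> g q - g p"
  proof (rule tendsto_upperbound[OF has_derivative_directional_quotient[OF assms(2)]])
    show "\<forall>\<^sub>F t in at_right 0. (g (p + t *\<^sub>R (q - p)) - g p) / t \<le> g q - g p"
    proof (rule eventually_at_rightI[of 0 1])
      fix t :: real assume t: "t \<in> {0<..<1}"
      have "p + t *\<^sub>R (q - p) = (1 - t) *\<^sub>R p + t *\<^sub>R q" by (simp add: algebra_simps)
      moreover have "g ((1 - t) *\<^sub>R p + t *\<^sub>R q) \<le> (1 - t) * g p + t * g q"
        using t by (intro convex_onD[OF assms(1)]) auto
      ultimately show "(g (p + t *\<^sub>R (q - p)) - g p) / t \<le> g q - g p"
        using t by (simp add: divide_simps algebra_simps)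
    qed simp
  qed simp
  then show ?thesis by simp
qed

lemma has_derivative_nonneg_if_min_along_ray:
  fixes g :: "'a::real_normed_vector \<Rightarrow> real"
  assumes "(g has_derivative g') (at p)"
    and "\<And>t. 0 < t \<Longrightarrow> t \<le> 1 \<Longrightarrow> g p \<le> g (p + t *\<^sub>R v)"
  shows "0 \<le> g' v"
proof (rule tendsto_lowerbound[OF has_derivative_directional_quotient[OF assms(1)]])
  show "\<forall>\<^sub>F t in at_right 0. 0 \<le> (g (p + t *\<^sub>R v) - g p) / t"
    by (rule eventually_at_rightI[of 0 1]) (use assms(2) in auto)
qed simp

lemma convex_on_Times_min_if_partial_derivatives_nonneg:
  fixes G :: "'a::real_normed_vector \<times> 'b::real_normed_vector \<Rightarrow> real"
  assumes G: "convex_on UNIV G" "(G has_derivative G') (at (x, z))"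
    and X: "\<And>u. u \<in> X \<Longrightarrow> 0 \<le> G' (u - x, 0)"
    and Z: "\<And>w. w \<in> Z \<Longrightarrow> 0 \<le> G' (0, w - z)"
    and uw: "u \<in> convex hull X" "w \<in> Z"
  shows "G (x, z) \<le> G (u, w)"
proof -
  have lin: "linear G'" using G(2) has_derivative_linear by blast
  have "linear (\<lambda>u. G' (u, 0::'b))"
    by (rule linear_compose[of "\<lambda>u. (u, 0)", unfolded o_def, OF _ lin]) (auto intro: linearI)
  then have "convex {u. G' (x, 0) \<le> G' (u, 0)}"
    using convex_linear_vimage[OF _ convex_real_interval(1), of _ "G' (x, 0)"]
    unfolding vimage_def by simp
  moreover have "G' (v - x, 0) = G' (v, 0) - G' (x, 0)" for v
    using linear_diff[OF lin, of "(v, 0)" "(x, 0)"] by simp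
  ultimately have "convex hull X \<subseteq> {u. 0 \<le> G' (u - x, 0)}"
    using X by (intro hull_minimal) auto
  moreover have "G' ((u, w) - (x, z)) = G' (u - x, 0) + G' (0, w - z)"
    using lin by (simp flip: linear_add)
  ultimately have "0 \<le> G' ((u, w) - (x, z))" using uw Z by fastforce
  with convex_on_has_derivative_above_tangent[OF G, of "(u, w)"] show ?thesis by linarith
qed

lemma convex_on_sublevel_combination:
  assumes "convex_on UNIV g" "g p \<le> l" "g q \<le> l" "0 \<le> s" "s \<le> 1"
  shows "g ((1 - s) *\<^sub>R p + s *\<^sub>R q) \<le> (l :: real)"
proof -
  have "g ((1 - s) *\<^sub>R p + s *\<^sub>R q) \<le> (1 - s) * g p + s * g q"
    using assms by (intro convex_onD) auto
  also have "\<dots> \<le> (1 - s) * l + s * l"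
    using assms by (intro add_mono mult_left_mono) auto
  finally show ?thesis by (simp add: algebra_simps)
qed

lemma sublevel_slices_avoid_sphere:
  fixes G :: "'a::euclidean_space \<times> 'b::euclidean_space \<Rightarrow> real"
  assumes G: "continuous_on UNIV G" and Z: "closed Z"
    and near: "\<And>w. w \<in> Z \<Longrightarrow> G (a, w) \<le> l \<Longrightarrow> dist b w < R"
  obtains e where "0 < e" "\<And>y w. dist a y < e \<Longrightarrow> w \<in> Z \<Longrightarrow> dist b w = R \<Longrightarrow> l < G (y, w)"
proof -
  define Q where "Q = (cball a 1 \<times> (Z \<inter> sphere b R)) \<inter> {p. G p \<le> l}"
  have "closed {p. G p \<le> l}" using G by (intro closed_Collect_le) auto
  then have "compact Q"
    unfolding Q_def using Z by (intro compact_Int_closed compact_Times closed_Int_compact) auto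
  then have "open (- (fst ` Q))"
    by (intro open_Compl compact_imp_closed compact_continuous_image continuous_intros)
  moreover have "a \<in> - (fst ` Q)" using near unfolding Q_def by force
  ultimately obtain \<delta> where \<delta>: "0 < \<delta>" "ball a \<delta> \<subseteq> - (fst ` Q)"
    using open_contains_ball by blast
  show ?thesis
  proof (rule that[of "min \<delta> 1"])
    fix y w assume "dist a y < min \<delta> 1" "w \<in> Z" "dist b w = R"
    then have "(y, w) \<notin> Q" using \<delta>(2) by force
    with \<open>dist a y < min \<delta> 1\<close> \<open>w \<in> Z\<close> \<open>dist b w = R\<close> show "l < G (y, w)"
      unfolding Q_def by auto
  qed (use \<delta> in simp)
qed

lemma convex_sublevel_slices_bounded:
  fixes G :: "'a::euclidean_space \<times> 'b::euclidean_space \<Rightarrow> real"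
  assumes G: "convex_on UNIV G" "continuous_on UNIV G"
    and C: "bounded C" and Z: "closed Z" "convex Z"
    and b: "b \<in> Z" "G (a, b) \<le> l"
    and slice: "compact {w \<in> Z. G (a, w) \<le> l}"
  shows "bounded {w \<in> Z. \<exists>y\<in>C. G (y, w) \<le> l}"
proof -
  obtain R0 where R0: "\<And>w. w \<in> Z \<Longrightarrow> G (a, w) \<le> l \<Longrightarrow> dist b w \<le> R0"
    using compact_imp_bounded[OF slice] unfolding bounded_any_center[where a=b] by auto
  define R where "R = max R0 0 + 1"
  have R: "0 < R" "\<And>w. w \<in> Z \<Longrightarrow> G (a, w) \<le> l \<Longrightarrow> dist b w < R"
    unfolding R_def by (auto intro!: le_less_trans[OF R0])
  obtain e where e: "0 < e" "\<And>y w. dist a y < e \<Longrightarrow> w \<in> Z \<Longrightarrow> dist b w = R \<Longrightarrow> l < G (y, w)"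
    using sublevel_slices_avoid_sphere[OF G(2) Z(1) R(2)] by blast
  obtain B where B: "\<And>y. y \<in> C \<Longrightarrow> dist a y \<le> B"
    using C unfolding bounded_any_center[where a=a] by auto
  have "dist b w \<le> R + R * max B 0 / e" if w: "w \<in> Z" "y \<in> C" "G (y, w) \<le> l" for y w
  proof (rule ccontr)
    define d where "d = dist b w"
    assume "\<not> dist b w \<le> R + R * max B 0 / e"
    then have "R + R * max B 0 / e < d" unfolding d_def by simp
    moreover have "0 \<le> R * max B 0 / e" using R e by simp
    ultimately have "R < d" "R * max B 0 / e < d" using R(1) by linarith+
    then have d: "R < d" "R * max B 0 < e * d"
      using e by (simp_all add: pos_divide_less_eq mult.commute)
    text \<open>Shrinking \<open>(y, w)\<close> towards \<open>(a, b)\<close> by the factor \<open>s = R / d\<close> lands on the sphere of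
      radius \<open>R\<close> in the second component, close to \<open>a\<close> in the first, and, by convexity,
      still inside the sublevel set.\<close>
    define s where "s = R / d"
    have s: "0 < s" "s < 1" unfolding s_def using d R by auto
    define y' where "y' = (1 - s) *\<^sub>R a + s *\<^sub>R y"
    define w' where "w' = (1 - s) *\<^sub>R b + s *\<^sub>R w"
    have "dist a y' = s * dist a y"
      unfolding y'_def using s by (simp add: dist_norm algebra_simps flip: scaleR_diff_right)
    also have "\<dots> \<le> s * max B 0" using B[OF w(2)] s by (simp add: mult_left_mono)
    also have "\<dots> < e" unfolding s_def using d R by (simp add: field_simps)
    finally have "dist a y' < e" .
    moreover have "dist b w' = s * d"
      unfolding w'_def d_def using s by (simp add: dist_norm algebra_simps flip: scaleR_diff_right)
    then have "dist b w' = R" unfolding s_def using d R by simp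
    moreover have "w' \<in> Z" unfolding w'_def using s b w Z(2) by (intro convexD) auto
    moreover have "G (y', w') \<le> l"
      using convex_on_sublevel_combination[OF G(1) b(2) w(3), of s] s
      unfolding y'_def w'_def by simp
    ultimately show False using e(2) by fastforce
  qed
  then show ?thesis unfolding bounded_any_center[where a=b] by blast
qed

lemma alternating_minimization_descent:
  fixes F :: "'a \<Rightarrow> 'b \<Rightarrow> real" and n :: nat
  assumes n: "1 \<le> n" and u: "u \<in> D" and z0: "zt 0 \<in> Z"
    and xt: "\<And>t. 1 \<le> t \<Longrightarrow> t \<le> n \<Longrightarrow> xt t \<in> argmin_set (\<lambda>u. F u (zt (t - 1))) D"
    and zt: "\<And>t. 1 \<le> t \<Longrightarrow> t \<le> n \<Longrightarrow> zt t \<in> argmin_set (\<lambda>w. F (xt t) w) Z"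
  shows "F (xt n) (zt n) \<le> F u (zt 0)"
  using n
proof (induct n rule: dec_induct)
  case base
  have "F (xt 1) (zt 1) \<le> F (xt 1) (zt 0)" using zt[of 1] n z0 by (simp add: argmin_set_def)
  also have "\<dots> \<le> F u (zt 0)" using xt[of 1] n u by (simp add: argmin_set_def)
  finally show ?case .
next
  case (step m)
  have "F (xt (Suc m)) (zt (Suc m)) \<le> F (xt (Suc m)) (zt m)"
    using zt[of "Suc m"] zt[of m] step.hyps by (simp add: argmin_set_def)
  also have "\<dots> \<le> F (xt m) (zt m)"
    using xt[of "Suc m"] xt[of m] step.hyps by (simp add: argmin_set_def)
  finally show ?case using step.hyps by linarith
qed

text \<open>The locale records only what the convergence argument needs from an SDM-GS run.\<close>

locale sdm_descent =
  fixes F :: "'a::euclidean_space \<Rightarrow> 'b::euclidean_space \<Rightarrow> real"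
    and DF :: "'a \<times> 'b \<Rightarrow> ('a \<times> 'b) \<Rightarrow>\<^sub>L real"
    and X :: "'a set" and Z :: "'b set"
    and x :: "nat \<Rightarrow> 'a" and z :: "nat \<Rightarrow> 'b"
    and xhat :: "nat \<Rightarrow> 'a" and D :: "nat \<Rightarrow> 'a set"
  assumes F_convex: "convex_on UNIV (\<lambda>p. F (fst p) (snd p))"
    and F_deriv: "\<And>p. ((\<lambda>p. F (fst p) (snd p)) has_derivative blinfun_apply (DF p)) (at p)"
    and DF_cont: "continuous_on UNIV DF"
    and X_compact: "compact X"
    and Z_closed: "closed Z" and Z_convex: "convex Z"
    and inf_comp: "\<And>u. u \<in> convex hull X \<Longrightarrow> inf_compact_on (\<lambda>w. F u w) Z"
    and x_hull: "\<And>k. x k \<in> convex hull X"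
    and z_argmin: "\<And>k. z k \<in> argmin_set (\<lambda>w. F (x k) w) Z"
    and descent: "\<And>k u. u \<in> D k \<Longrightarrow> F (x (Suc k)) (z (Suc k)) \<le> F u (z k)"
    and xhat_argmin: "\<And>k. xhat (Suc k) \<in>
           argmin_set (\<lambda>u. DF (x (Suc k), z (Suc k)) (u - x (Suc k), 0)) X"
    and segment_in_D: "\<And>k a. 0 \<le> a \<Longrightarrow> a \<le> 1 \<Longrightarrow>
           x (Suc k) + a *\<^sub>R (xhat (Suc k) - x (Suc k)) \<in> D (Suc k)"
begin

lemma F_continuous: "continuous_on UNIV (\<lambda>p. F (fst p) (snd p))"
  using F_deriv has_derivative_continuous continuous_at_imp_continuous_on by blast

lemma tendsto_F:
  assumes "a \<longlonglongrightarrow> u" "b \<longlonglongrightarrow> w"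
  shows "(\<lambda>k. F (a k) (b k)) \<longlonglongrightarrow> F u w"
proof -
  have "isCont (\<lambda>p. F (fst p) (snd p)) (u, w)" using F_deriv has_derivative_continuous by blast
  from isCont_tendsto_compose[OF this tendsto_Pair[OF assms]] show ?thesis by simp
qed

lemma tendsto_DF:
  assumes "a \<longlonglongrightarrow> u" "b \<longlonglongrightarrow> w"
  shows "(\<lambda>k. DF (a k, b k)) \<longlonglongrightarrow> DF (u, w)"
proof -
  have "isCont DF (u, w)" using DF_cont by (simp add: continuous_on_eq_continuous_at)
  from isCont_tendsto_compose[OF this tendsto_Pair[OF assms]] show ?thesis .
qed

lemma z_in_Z: "z k \<in> Z"
  and z_min: "w \<in> Z \<Longrightarrow> F (x k) (z k) \<le> F (x k) w"
  using z_argmin[of k] by (auto simp: argmin_set_def)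

lemma x_Suc_in_D: "x (Suc k) \<in> D (Suc k)"
  using segment_in_D[of 0 k] by simp

lemma value_antimono:
  assumes "1 \<le> m" "m \<le> n"
  shows "F (x n) (z n) \<le> F (x m) (z m)"
  using assms(2)
proof (induct n rule: dec_induct)
  case (step n)
  then obtain j where "n = Suc j" using assms(1) by (cases n) auto
  then show ?case using descent[OF x_Suc_in_D, of j] step by simp
qed simp

lemma iterates_bounded: "bounded (range (\<lambda>k. (x k, z k)))"
proof -
  define L where "L = {w \<in> Z. \<exists>y\<in>convex hull X. F y w \<le> F (x 1) (z 1)}"
  have "compact {w \<in> Z. F (x 1) w \<le> F (x 1) (z 1)}"
    using inf_comp[OF x_hull] unfolding inf_compact_on_def by blast
  then have "bounded {w \<in> Z. \<exists>y\<in>convex hull X. F (fst (y, w)) (snd (y, w)) \<le> F (x 1) (z 1)}"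
    by (intro convex_sublevel_slices_bounded[where a="x 1", OF F_convex F_continuous
          compact_imp_bounded[OF compact_convex_hull[OF X_compact]] Z_closed Z_convex z_in_Z[of 1]]) simp_all
  then have "bounded ((convex hull X) \<times> insert (z 0) L)"
    unfolding L_def
    by (intro bounded_Times compact_imp_bounded[OF compact_convex_hull[OF X_compact]]) simp
  moreover have "(x k, z k) \<in> (convex hull X) \<times> insert (z 0) L" for k
    using x_hull z_in_Z value_antimono[of 1 k] unfolding L_def by (cases k) auto
  ultimately show ?thesis by (blast intro: bounded_subset)
qed

lemma limit_point_exists: "\<exists>l r. strict_mono r \<and> ((\<lambda>k. (x (r k), z (r k))) \<longlongrightarrow> l) sequentially"
  using bounded_imp_convergent_subsequence[OF iterates_bounded] by (auto simp: o_def)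

context
  fixes r :: "nat \<Rightarrow> nat" and xb :: 'a and zb :: 'b
  assumes r: "strict_mono r"
    and lim: "((\<lambda>k. (x (r k), z (r k))) \<longlongrightarrow> (xb, zb)) sequentially"
begin

lemma limit_x: "(\<lambda>k. x (r k)) \<longlonglongrightarrow> xb"
  and limit_z: "(\<lambda>k. z (r k)) \<longlonglongrightarrow> zb"
  using tendsto_fst[OF lim] tendsto_snd[OF lim] by simp_all

lemma limit_feasible: "xb \<in> convex hull X" "zb \<in> Z"
  using closed_sequentially[OF compact_imp_closed[OF compact_convex_hull[OF X_compact]] _ limit_x]
    closed_sequentially[OF Z_closed _ limit_z] x_hull z_in_Z by blast+

lemma limit_value_le: "1 \<le> m \<Longrightarrow> F xb zb \<le> F (x m) (z m)"
  using LIMSEQ_le_const2[OF tendsto_F[OF limit_x limit_z]] value_antimono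
    seq_suble[OF r] le_trans by blast

lemma limit_z_min: "w \<in> Z \<Longrightarrow> F xb zb \<le> F xb w"
  using LIMSEQ_le[OF tendsto_F[OF limit_x limit_z] tendsto_F[OF limit_x tendsto_const]] z_min
  by blast

lemma limit_partial_derivative_z_nonneg:
  assumes "w \<in> Z"
  shows "0 \<le> DF (xb, zb) (0, w - zb)"
proof (rule has_derivative_nonneg_if_min_along_ray[OF F_deriv])
  fix t :: real assume "0 < t" "t \<le> 1"
  then have "(1 - t) *\<^sub>R zb + t *\<^sub>R w \<in> Z"
    using assms limit_feasible(2) Z_convex by (intro convexD) auto
  moreover have "zb + t *\<^sub>R (w - zb) = (1 - t) *\<^sub>R zb + t *\<^sub>R w" by (simp add: algebra_simps)
  ultimately show "F (fst (xb, zb)) (snd (xb, zb))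
      \<le> F (fst ((xb, zb) + t *\<^sub>R (0, w - zb))) (snd ((xb, zb) + t *\<^sub>R (0, w - zb)))"
    using limit_z_min[of "zb + t *\<^sub>R (w - zb)"] by simp
qed

lemma limit_xhat_subsequence:
  obtains j xs where "xs \<in> X" "(\<lambda>k. x (Suc (j k))) \<longlonglongrightarrow> xb" "(\<lambda>k. z (Suc (j k))) \<longlonglongrightarrow> zb"
    "(\<lambda>k. xhat (Suc (j k))) \<longlonglongrightarrow> xs"
proof -
  define i where "i k = r (Suc k) - 1" for k
  have r_Suc: "Suc (i k) = r (Suc k)" for k
    using seq_suble[OF r, of "Suc k"] unfolding i_def by simp
  have "xhat (r (Suc k)) \<in> X" for k
    using xhat_argmin[of "i k"] by (simp add: r_Suc argmin_set_def)
  then obtain xs s where "xs \<in> X" "strict_mono s" "((\<lambda>k. xhat (r (Suc k))) \<circ> s) \<longlonglongrightarrow> xs"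
    using seq_compactE[OF compact_imp_seq_compact[OF X_compact], of "\<lambda>k. xhat (r (Suc k))"] by blast
  moreover have "strict_mono (\<lambda>k. Suc (s k))"
    using \<open>strict_mono s\<close> by (simp add: strict_mono_def)
  ultimately show ?thesis
    using that[of xs "\<lambda>k. i (s k)"]
      LIMSEQ_subseq_LIMSEQ[OF limit_x] LIMSEQ_subseq_LIMSEQ[OF limit_z]
    by (simp add: r_Suc o_def)
qed

lemma limit_partial_derivative_x_nonneg:
  assumes "u \<in> X"
  shows "0 \<le> DF (xb, zb) (u - xb, 0)"
proof -
  obtain j xs where xs: "xs \<in> X" and xj: "(\<lambda>k. x (Suc (j k))) \<longlonglongrightarrow> xb"
    and zj: "(\<lambda>k. z (Suc (j k))) \<longlonglongrightarrow> zb" and hj: "(\<lambda>k. xhat (Suc (j k))) \<longlonglongrightarrow> xs"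
    by (rule limit_xhat_subsequence)
  have "F xb zb \<le> F (xb + t *\<^sub>R (xs - xb)) zb" if "0 \<le> t" "t \<le> 1" for t
  proof (rule LIMSEQ_le_const[OF tendsto_F[OF _ zj]])
    show "(\<lambda>k. x (Suc (j k)) + t *\<^sub>R (xhat (Suc (j k)) - x (Suc (j k)))) \<longlonglongrightarrow> xb + t *\<^sub>R (xs - xb)"
      by (intro tendsto_intros xj hj)
    show "\<exists>N. \<forall>k\<ge>N. F xb zb \<le> F (x (Suc (j k)) + t *\<^sub>R (xhat (Suc (j k)) - x (Suc (j k)))) (z (Suc (j k)))"
    proof (intro exI allI impI)
      fix k :: nat
      have "F xb zb \<le> F (x (Suc (Suc (j k)))) (z (Suc (Suc (j k))))" by (rule limit_value_le) simp
      also have "\<dots> \<le> F (x (Suc (j k)) + t *\<^sub>R (xhat (Suc (j k)) - x (Suc (j k)))) (z (Suc (j k)))"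
        by (rule descent[OF segment_in_D[OF that]])
      finally show "F xb zb \<le> F (x (Suc (j k)) + t *\<^sub>R (xhat (Suc (j k)) - x (Suc (j k)))) (z (Suc (j k)))" .
    qed
  qed
  then have "0 \<le> DF (xb, zb) (xs - xb, 0)"
    by (intro has_derivative_nonneg_if_min_along_ray[OF F_deriv]) simp
  also have "DF (xb, zb) (xs - xb, 0) \<le> DF (xb, zb) (u - xb, 0)"
  proof (rule LIMSEQ_le)
    show "(\<lambda>k. DF (x (Suc (j k)), z (Suc (j k))) (xhat (Suc (j k)) - x (Suc (j k)), 0))
        \<longlonglongrightarrow> DF (xb, zb) (xs - xb, 0)"
      by (intro blinfun.tendsto tendsto_DF xj zj tendsto_intros hj)
    show "(\<lambda>k. DF (x (Suc (j k)), z (Suc (j k))) (u - x (Suc (j k)), 0))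
        \<longlonglongrightarrow> DF (xb, zb) (u - xb, 0)"
      by (intro blinfun.tendsto tendsto_DF xj zj tendsto_intros)
    show "\<exists>N. \<forall>k\<ge>N. DF (x (Suc (j k)), z (Suc (j k))) (xhat (Suc (j k)) - x (Suc (j k)), 0)
        \<le> DF (x (Suc (j k)), z (Suc (j k))) (u - x (Suc (j k)), 0)"
      using xhat_argmin assms by (auto simp: argmin_set_def)
  qed
  finally show ?thesis .
qed

text \<open>Note that \<open>convex hull X \<times> Z\<close> parses as \<open>convex hull (X \<times> Z)\<close>.\<close>

lemma limit_point_optimal:
  "(xb, zb) \<in> argmin_set (\<lambda>p. F (fst p) (snd p)) (convex hull X \<times> Z)"
proof -
  have "F xb zb \<le> F u w" if "u \<in> convex hull X" "w \<in> Z" for u w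
    using convex_on_Times_min_if_partial_derivatives_nonneg[where X=X and Z=Z, OF F_convex F_deriv
        limit_partial_derivative_x_nonneg limit_partial_derivative_z_nonneg that]
    by simp
  moreover have "convex hull (X \<times> Z) = (convex hull X) \<times> Z"
    using convex_hull_Times hull_same[of convex Z] Z_convex by metis
  ultimately show ?thesis
    using limit_feasible unfolding argmin_set_def by auto
qed

end

end

theorem proposition3:
  fixes F :: "'a::euclidean_space \<Rightarrow> 'b::euclidean_space \<Rightarrow> real"
    and DF :: "'a \<times> 'b \<Rightarrow> ('a \<times> 'b) \<Rightarrow>\<^sub>L real"
    and X :: "'a set" and Z :: "'b set" and tmax :: nat
    and x :: "nat \<Rightarrow> 'a" and z :: "nat \<Rightarrow> 'b"
    and xt :: "nat \<Rightarrow> nat \<Rightarrow> 'a" and zt :: "nat \<Rightarrow> nat \<Rightarrow> 'b"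
    and xhat :: "nat \<Rightarrow> 'a" and D :: "nat \<Rightarrow> 'a set"
  assumes F_convex: "convex_on UNIV (\<lambda>p. F (fst p) (snd p))"
    and F_deriv: "\<And>p. ((\<lambda>p. F (fst p) (snd p)) has_derivative blinfun_apply (DF p)) (at p)"
    and DF_cont: "continuous_on UNIV DF"
    and X_ne: "X \<noteq> {}" and X_compact: "compact X"
    and Z_ne: "Z \<noteq> {}" and Z_closed: "closed Z" and Z_convex: "convex Z"
    and inf_comp: "\<And>u. u \<in> convex hull X \<Longrightarrow> inf_compact_on (\<lambda>w. F u w) Z"
    and tmax: "tmax \<ge> 1"
    and x0: "x 0 \<in> convex hull X"
    and z0: "z 0 \<in> argmin_set (\<lambda>w. F (x 0) w) Z"
    and D0: "D 0 \<noteq> {}" "closed (D 0)" "convex (D 0)" "D 0 \<subseteq> convex hull X"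
    and inner_start: "\<And>k. xt k 0 = x k" "\<And>k. zt k 0 = z k"
    and inner_x: "\<And>k t. 1 \<le> t \<Longrightarrow> t \<le> tmax \<Longrightarrow>
                    xt k t \<in> argmin_set (\<lambda>u. F u (zt k (t - 1))) (D k)"
    and inner_z: "\<And>k t. 1 \<le> t \<Longrightarrow> t \<le> tmax \<Longrightarrow>
                    zt k t \<in> argmin_set (\<lambda>w. F (xt k t) w) Z"
    and x_next: "\<And>k. x (Suc k) = xt k tmax"
    and z_next: "\<And>k. z (Suc k) = zt k tmax"
    and xhat_def: "\<And>k. xhat (Suc k) \<in>
           argmin_set (\<lambda>u. DF (x (Suc k), z (Suc k)) (u - x (Suc k), 0)) X"
    and D_next: "\<And>k. closed (D (Suc k)) \<and> convex (D (Suc k))"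
    and D_lower: "\<And>k. {x (Suc k) + \<alpha> *\<^sub>R (xhat (Suc k) - x (Suc k)) | \<alpha>. 0 \<le> \<alpha> \<and> \<alpha> \<le> 1}
                        \<subseteq> D (Suc k)"
    and D_upper: "\<And>k. D (Suc k) \<subseteq> convex hull X"
  shows "(\<exists>l r. strict_mono r \<and> ((\<lambda>k. (x (r k), z (r k))) \<longlongrightarrow> l) sequentially)
       \<and> (\<forall>xb zb r. strict_mono r \<and> ((\<lambda>k. (x (r k), z (r k))) \<longlongrightarrow> (xb, zb)) sequentially
            \<longrightarrow> (xb, zb) \<in> argmin_set (\<lambda>p. F (fst p) (snd p)) (convex hull X \<times> Z))"
proof -
  have D_hull: "D k \<subseteq> convex hull X" for k
    using D0(4) D_upper by (cases k) auto
  have "x (Suc k) \<in> D k" for k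
    using inner_x[where t=tmax] tmax x_next by (simp add: argmin_set_def)
  then have x_hull: "x k \<in> convex hull X" for k
    using x0 D_hull by (cases k) auto
  have z_argmin: "z k \<in> argmin_set (\<lambda>w. F (x k) w) Z" for k
    using z0 inner_z[where t=tmax] tmax x_next z_next by (cases k) auto
  have descent: "F (x (Suc k)) (z (Suc k)) \<le> F u (z k)" if "u \<in> D k" for k u
  proof -
    have "F (xt k tmax) (zt k tmax) \<le> F u (zt k 0)"
      by (rule alternating_minimization_descent[where F=F and xt="xt k" and zt="zt k",
            OF tmax that _ inner_x inner_z])
        (use z_argmin[of k] in \<open>simp_all add: inner_start argmin_set_def\<close>)
    then show ?thesis using x_next z_next inner_start by simp
  qed
  have segment_in_D: "x (Suc k) + a *\<^sub>R (xhat (Suc k) - x (Suc k)) \<in> D (Suc k)"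
    if "0 \<le> a" "a \<le> 1" for k a
    using D_lower[of k] that by blast
  interpret sdm: sdm_descent F DF X Z x z xhat D
    by unfold_locales (fact F_convex F_deriv DF_cont X_compact Z_closed Z_convex inf_comp x_hull
        z_argmin descent xhat_def segment_in_D)+
  show ?thesis
    using sdm.limit_point_exists sdm.limit_point_optimal by (intro conjI allI impI) auto
qed

end
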